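(* Let $N, P, M, K, C$ be positive integers such that $M$ divides $P$ and $C$ divides $M$; put $S = P/M$ and $M' = M/C$ (so that $P/M' = CS$). Let $\mathbf{x}_1,\dots,\mathbf{x}_N\in\mathbb{R}^P$ be fixed data points. For blocks $\mathbf{v}^1,\dots,\mathbf{v}^L$ write $[\mathbf{v}^1;\dots;\mathbf{v}^L]$ for their vertical concatenation. In what follows $\mathbf{R}$ ranges over real $P\times P$ matrices with $\mathbf{R}^T\mathbf{R}=\mathbf{I}$, and code constraints are imposed for all indices. Define the CKM optimal value with $M$ subvectors $$f^*_{\mathrm{ck},M,K} = \inf \sum_{i=1}^N \big\|\mathbf{x}_i - \mathbf{R}[\mathbf{D}^1\mathbf{b}_i^1;\dots;\mathbf{D}^M\mathbf{b}_i^M]\big\|_2^2,$$ the infimum over $\mathbf{R}$, $\mathbf{D}^m\in\mathbb{R}^{S\times K}$ ($m=1,\dots,M$), and $\mathbf{b}_i^m\in\{0,1\}^K$ with $\|\mathbf{b}_i^m\|_1=1$. Define the OCKM optimal value with $M'$ subvectors (each of dimension $CS$) $$f^*_{\mathrm{ock},M',K,C} = \inf \sum_{i=1}^N \big\|\mathbf{x}_i - \mathbf{R}[\textstyle\sum_{c=1}^C\mathbf{D}^{1,c}\mathbf{b}_i^{1,c};\dots;\sum_{c=1}^C\mathbf{D}^{M',c}\mathbf{b}_i^{M',c}]\big\|_2^2,$$ the infimum over $\mathbf{R}$, $\mathbf{D}^{p,c}\in\mathbb{R}^{CS\times K}$ ($p=1,\dots,M'$, $c=1,\dots,C$), and $\mathbf{b}_i^{p,c}\in\{0,1\}^K$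 with $\|\mathbf{b}_i^{p,c}\|_1=1$. Then $f^*_{\mathrm{ock},M',K,C} \le f^*_{\mathrm{ck},M,K}$.
   Context: $\|\cdot\|_2$ is the Euclidean norm and $\|\cdot\|_1$ the $\ell_1$ norm. These are the optimal distortion errors of Cartesian $K$-means (CKM) and optimized Cartesian $K$-means (OCKM); under the stated choices both encodings use code length $M\log_2 K$ bits. *)

theory Defs
  imports Main "HOL.Real"
begin

text \<open>Vectors of R^n are functions nat => real (only indices < n matter);
  matrices are nat => nat => real (row, column), indices 0-based.\<close>

definition orth_mat :: "nat \<Rightarrow> (nat \<Rightarrow> nat \<Rightarrow> real) \<Rightarrow> bool" where
  "orth_mat P R \<longleftrightarrow> (\<forall>i<P. \<forall>j<P. (\<Sum>k<P. R k i * R k j) = (if i = j then 1 else 0))"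

definition onehot :: "nat \<Rightarrow> (nat \<Rightarrow> real) \<Rightarrow> bool" where
  "onehot K b \<longleftrightarrow> (\<forall>k<K. b k \<in> {0, 1}) \<and> (\<Sum>k<K. \<bar>b k\<bar>) = 1"

definition mat_vec :: "nat \<Rightarrow> (nat \<Rightarrow> nat \<Rightarrow> real) \<Rightarrow> (nat \<Rightarrow> real) \<Rightarrow> nat \<Rightarrow> real" where
  "mat_vec P R y = (\<lambda>r. \<Sum>j<P. R r j * y j)"

definition sqdist :: "nat \<Rightarrow> (nat \<Rightarrow> real) \<Rightarrow> (nat \<Rightarrow> real) \<Rightarrow> real" where
  "sqdist P u v = (\<Sum>r<P. (u r - v r)\<^sup>2)"

text \<open>CKM: M blocks of dimension S = P div M; block m occupies indices m*S ..< (m+1)*S.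
  D m is the S x K codebook of block m, b i m the code of point i in block m.\<close>
definition ckm_recon :: "nat \<Rightarrow> nat \<Rightarrow> (nat \<Rightarrow> nat \<Rightarrow> nat \<Rightarrow> real) \<Rightarrow> (nat \<Rightarrow> nat \<Rightarrow> real) \<Rightarrow> nat \<Rightarrow> real" where
  "ckm_recon S K D bi = (\<lambda>j. \<Sum>k<K. D (j div S) (j mod S) k * bi (j div S) k)"

definition ckm_opt :: "nat \<Rightarrow> nat \<Rightarrow> nat \<Rightarrow> nat \<Rightarrow> (nat \<Rightarrow> nat \<Rightarrow> real) \<Rightarrow> real" where
  "ckm_opt N P M K x = Inf {(\<Sum>i<N. sqdist P (x i) (mat_vec P R (ckm_recon (P div M) K D (b i)))) | R D b.
      orth_mat P R \<and> (\<forall>i<N. \<forall>m<M. onehot K (b i m))}"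

definition ockm_recon :: "nat \<Rightarrow> nat \<Rightarrow> nat \<Rightarrow> (nat \<Rightarrow> nat \<Rightarrow> nat \<Rightarrow> nat \<Rightarrow> real) \<Rightarrow> (nat \<Rightarrow> nat \<Rightarrow> nat \<Rightarrow> real) \<Rightarrow> nat \<Rightarrow> real" where
  "ockm_recon T C K D bi = (\<lambda>j. \<Sum>c<C. \<Sum>k<K. D (j div T) c (j mod T) k * bi (j div T) c k)"

definition ockm_opt :: "nat \<Rightarrow> nat \<Rightarrow> nat \<Rightarrow> nat \<Rightarrow> nat \<Rightarrow> (nat \<Rightarrow> nat \<Rightarrow> real) \<Rightarrow> real" where
  "ockm_opt N P Mp K C x = Inf {(\<Sum>i<N. sqdist P (x i) (mat_vec P R (ockm_recon (P div Mp) C K D (b i)))) | R D b.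
      orth_mat P R \<and> (\<forall>i<N. \<forall>p<Mp. \<forall>c<C. onehot K (b i p c))}"

end

theory Submission
  imports Defs
begin

text \<open>Every CKM encoding is an OCKM encoding: group the CKM blocks into consecutive runs of
  C blocks, and let the c-th OCKM codebook of a group be the c-th CKM codebook padded with zeros
  outside the c-th slot of length S. The reconstructions then coincide, so the OCKM objective
  ranges over a superset of the CKM values and its infimum can only be smaller.\<close>

lemma div_mod_mult_block_index:
  fixes j S C :: nat
  assumes "0 < S"
  shows "(j div (S * C)) * C + (j mod (S * C)) div S = j div S"
    and "(j mod (S * C)) mod S = j mod S"
    and "0 < C \<Longrightarrow> (j mod (S * C)) div S < C"
proof -
  have m: "j mod (S * C) = S * (j div S mod C) + j mod S" by (rule mod_mult2_eq)
  have d: "(j mod (S * C)) div S = j div S mod C"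
    using assms by (simp add: m)
  show "(j div (S * C)) * C + (j mod (S * C)) div S = j div S"
    by (simp add: d div_mult2_eq)
  show "(j mod (S * C)) mod S = j mod S" by (simp add: m)
  show "0 < C \<Longrightarrow> (j mod (S * C)) div S < C" by (simp add: d)
qed

lemma ockm_recon_padded_codebooks:
  assumes "0 < S" "0 < C"
  shows "ockm_recon (S * C) C K (\<lambda>p c t k. if t div S = c then D (p * C + c) (t mod S) k else 0)
           (\<lambda>p c. bi (p * C + c))
         = ckm_recon S K D bi"
proof
  fix j
  let ?p = "j div (S * C)" and ?t = "j mod (S * C)"
  let ?c0 = "?t div S"
  have c0: "?c0 < C" using div_mod_mult_block_index(3)[OF assms] .
  have "ockm_recon (S * C) C K (\<lambda>p c t k. if t div S = c then D (p * C + c) (t mod S) k else 0)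
          (\<lambda>p c. bi (p * C + c)) j
      = (\<Sum>c<C. if c = ?c0 then (\<Sum>k<K. D (?p * C + c) (?t mod S) k * bi (?p * C + c) k) else 0)"
    unfolding ockm_recon_def by (intro sum.cong) auto
  also have "\<dots> = (\<Sum>k<K. D (?p * C + ?c0) (?t mod S) k * bi (?p * C + ?c0) k)"
    using c0 by (simp add: sum.delta)
  also have "\<dots> = ckm_recon S K D bi j"
    unfolding ckm_recon_def using div_mod_mult_block_index(1,2)[OF assms(1), of j C] by simp
  finally show "ockm_recon (S * C) C K (\<lambda>p c t k. if t div S = c then D (p * C + c) (t mod S) k else 0)
          (\<lambda>p c. bi (p * C + c)) j = ckm_recon S K D bi j" .
qed

lemma orth_mat_identity: "orth_mat P (\<lambda>i j. if i = j then 1 else 0)"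
  unfolding orth_mat_def by (auto simp: if_distrib[of "\<lambda>z. z * _"] cong: if_cong)

lemma onehot_first: "0 < K \<Longrightarrow> onehot K (\<lambda>k. if k = 0 then 1 else 0)"
  unfolding onehot_def by (auto simp: if_distrib[of abs] cong: if_cong)

lemma sqdist_nonneg: "0 \<le> sqdist P u v"
  unfolding sqdist_def by (intro sum_nonneg) simp

lemma ckm_values_subset_ockm_values:
  fixes N M Mp :: nat
  assumes "0 < S" "0 < C" "M = Mp * C"
  shows "{(\<Sum>i<N. sqdist P (x i) (mat_vec P R (ckm_recon S K D (b i)))) | R D b.
            orth_mat P R \<and> (\<forall>i<N. \<forall>m<M. onehot K (b i m))}
       \<subseteq> {(\<Sum>i<N. sqdist P (x i) (mat_vec P R (ockm_recon (S * C) C K D (b i)))) | R D b.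
            orth_mat P R \<and> (\<forall>i<N. \<forall>p<Mp. \<forall>c<C. onehot K (b i p c))}"
    (is "_ \<subseteq> ?ock")
proof
  fix y assume "y \<in> {(\<Sum>i<N. sqdist P (x i) (mat_vec P R (ckm_recon S K D (b i)))) | R D b.
            orth_mat P R \<and> (\<forall>i<N. \<forall>m<M. onehot K (b i m))}"
  then obtain R D b where y: "y = (\<Sum>i<N. sqdist P (x i) (mat_vec P R (ckm_recon S K D (b i))))"
    and R: "orth_mat P R" and b: "\<forall>i<N. \<forall>m<M. onehot K (b i m)"
    by blast
  define b' where "b' = (\<lambda>i p c. b i (p * C + c))"
  define D' where "D' = (\<lambda>p c t k. if t div S = c then D (p * C + c) (t mod S) k else 0)"
  have "p * C + c < M" if "p < Mp" "c < C" for p c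
  proof -
    have "p * C + c < Suc p * C" using that(2) by simp
    also have "\<dots> \<le> M" unfolding assms(3) using that(1) by (intro mult_right_mono) auto
    finally show ?thesis .
  qed
  then have "\<forall>i<N. \<forall>p<Mp. \<forall>c<C. onehot K (b' i p c)" using b by (simp add: b'_def)
  moreover have recon: "ockm_recon (S * C) C K D' (b' i) = ckm_recon S K D (b i)" for i
    unfolding D'_def b'_def using ockm_recon_padded_codebooks[OF assms(1,2)] by simp
  ultimately show "y \<in> ?ock" unfolding y recon[symmetric] using R by blast
qed

lemma ckm_values_nonempty:
  fixes N M :: nat
  assumes "0 < K"
  shows "{(\<Sum>i<N. sqdist P (x i) (mat_vec P R (ckm_recon S K D (b i)))) | R D b.
            orth_mat P R \<and> (\<forall>i<N. \<forall>m<M. onehot K (b i m))} \<noteq> {}"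
proof -
  define b0 :: "nat \<Rightarrow> nat \<Rightarrow> nat \<Rightarrow> real" where "b0 = (\<lambda>_ _ k. if k = 0 then 1 else 0)"
  have "\<forall>i<N. \<forall>m<M. onehot K (b0 i m)"
    using onehot_first[OF assms] by (simp add: b0_def)
  then show ?thesis using orth_mat_identity by blast
qed

theorem theorem2:
  fixes N P M K C :: nat and x :: "nat \<Rightarrow> nat \<Rightarrow> real"
  assumes "0 < N" "0 < P" "0 < M" "0 < K" "0 < C" "M dvd P" "C dvd M"
  shows "ockm_opt N P (M div C) K C x \<le> ckm_opt N P M K x"
proof -
  define S where "S = P div M"
  define Mp where "Mp = M div C"
  have M_eq: "M = Mp * C" using assms(7) by (simp add: Mp_def)
  have P_eq: "P = Mp * C * S" using assms(6) M_eq by (simp add: S_def)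
  have "0 < S" "0 < Mp" using assms(2) P_eq by auto
  then have T: "P div Mp = S * C" using P_eq by simp
  let ?ock = "{(\<Sum>i<N. sqdist P (x i) (mat_vec P R (ockm_recon (S * C) C K D (b i)))) | R D b.
      orth_mat P R \<and> (\<forall>i<N. \<forall>p<Mp. \<forall>c<C. onehot K (b i p c))}"
  let ?ck = "{(\<Sum>i<N. sqdist P (x i) (mat_vec P R (ckm_recon S K D (b i)))) | R D b.
      orth_mat P R \<and> (\<forall>i<N. \<forall>m<M. onehot K (b i m))}"
  have "?ck \<noteq> {}" using ckm_values_nonempty[OF assms(4)] .
  moreover have "bdd_below ?ock"
    by (rule bdd_belowI[of _ 0]) (auto intro: sum_nonneg sqdist_nonneg)
  moreover have "?ck \<subseteq> ?ock"
    using ckm_values_subset_ockm_values[OF \<open>0 < S\<close> assms(5) M_eq] .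
  ultimately have "Inf ?ock \<le> Inf ?ck" by (rule cInf_superset_mono)
  then show ?thesis unfolding ockm_opt_def ckm_opt_def Mp_def[symmetric] S_def[symmetric] T .
qed

end
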